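(* Let $D$ be a Newton diagram in $2$ variables whose support is exactly $K=\{(a,b)\in\mathbb N_0^2: a+b<d\}$ for some integer $d\ge1$. Then $SC(D)\ge\frac{d+1}{2}$.
   Context: For $m\in\mathbb Z^n$ write $|m|=m_1+\dots+m_n$; $e_1,\dots,e_n$ is the standard basis. A Newton diagram in $n$ variables is a function $D\colon\mathbb Z^n\to\{0,P,N\}$ ($P,N$ formal symbols) whose support $K=D^{-1}(\{P,N\})$ is a finite nonempty subset of $\mathbb N_0^n$. For $a\in\mathbb Z^n$ let $E(a)=\{a,a-e_1,\dots,a-e_n\}$; $E(a)$ is a node of $D$ if the image $D(E(a))$ equals $\{P\}$, $\{N\}$, $\{0,P\}$ or $\{0,N\}$. For $n=2$: a node $E(a)$ is an interior node if no point of $E(a)$ has $D$-value $0$, an edge node if exactly one does, a vertex node if exactly two do; a vertex node is a bottom node if its two $0$-points are $a-e_1$ and $a-e_2$. The weighted surface count is $SC(D)=(\#\text{interior nodes})+\tfrac12\big((\#\text{edge nodes})+(\#\text{vertex nodes})-(\#\text{bottom nodes})\big)$. *)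

theory Defs
  imports Complex_Main
begin

datatype sgn = Z | P | N

type_synonym diagram2 = "int \<times> int \<Rightarrow> sgn"

definition support2 :: "diagram2 \<Rightarrow> (int \<times> int) set" where
  "support2 D = {x. D x \<noteq> Z}"

definition newton_diagram2 :: "diagram2 \<Rightarrow> bool" where
  "newton_diagram2 D \<longleftrightarrow> finite (support2 D) \<and> support2 D \<noteq> {} \<and>
     (\<forall>(u,v)\<in>support2 D. u \<ge> 0 \<and> v \<ge> 0)"

definition Eset :: "int \<times> int \<Rightarrow> (int \<times> int) set" where
  "Eset a = {a, (fst a - 1, snd a), (fst a, snd a - 1)}"

definition is_node :: "diagram2 \<Rightarrow> int \<times> int \<Rightarrow> bool" where
  "is_node D a \<longleftrightarrow> D ` Eset a \<in> {{P}, {N}, {Z, P}, {Z, N}}"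

definition zeros :: "diagram2 \<Rightarrow> int \<times> int \<Rightarrow> nat" where
  "zeros D a = card {x \<in> Eset a. D x = Z}"

definition interior_nodes :: "diagram2 \<Rightarrow> (int \<times> int) set" where
  "interior_nodes D = {a. is_node D a \<and> zeros D a = 0}"

definition edge_nodes :: "diagram2 \<Rightarrow> (int \<times> int) set" where
  "edge_nodes D = {a. is_node D a \<and> zeros D a = 1}"

definition vertex_nodes :: "diagram2 \<Rightarrow> (int \<times> int) set" where
  "vertex_nodes D = {a. is_node D a \<and> zeros D a = 2}"

definition bottom_nodes :: "diagram2 \<Rightarrow> (int \<times> int) set" where
  "bottom_nodes D = {a. a \<in> vertex_nodes D \<and>
     {x \<in> Eset a. D x = Z} = {(fst a - 1, snd a), (fst a, snd a - 1)}}"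

definition SC :: "diagram2 \<Rightarrow> real" where
  "SC D = real (card (interior_nodes D)) +
     (real (card (edge_nodes D)) + real (card (vertex_nodes D))
      - real (card (bottom_nodes D))) / 2"

end

theory Submission
  imports Defs
begin

(*
  Record only whether each point is positive, as a boolean function g on the triangle.
  Along the bottom row, every pair of adjacent equal signs yields an edge node and every
  sign change has to be "paid for" by the row above it: a two-row exchange argument
  (strip_changes) bounds the changes in a row by the changes in the next row plus
  agreements on the ends of the strip and, counted twice, monochromatic downward cells.
  Telescoping over the rows gives  n - 1 <= (boundary agreements) + 2 (cell agreements)
  (triangle_agreements), a statement purely about boolean functions.
  Each boundary agreement is an edge node on one of the three sides, each monochromatic
  cell an interior node, injectively; so n - 1 <= #edge + 2 #interior.  Finally the two
  corners (n,0) and (0,n) are vertex nodes that are not bottom nodes, so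
  #vertex - #bottom >= 2, and SC D >= (n - 1)/2 + 1 = (n + 1)/2.
*)

definition changes :: "(nat \<Rightarrow> bool) \<Rightarrow> nat \<Rightarrow> nat" where
  "changes h m = (\<Sum>i<m. of_bool (h i \<noteq> h (Suc i)))"

(* A change in b is charged to an agreement at one end of the strip,
   to a change in t, or (twice) to a monochromatic cell t i = t (i+1) = b (i+1). *)

lemma strip_changes:
  fixes b t :: "nat \<Rightarrow> bool"
  shows "changes b (Suc k) \<le> of_bool (b 0 = t 0) + of_bool (t k = b (Suc k))
     + 2 * (\<Sum>i<k. of_bool (t i = t (Suc i) \<and> t (Suc i) = b (Suc i))) + changes t k"
proof (induction k)
  case 0
  show ?case by (cases "b 0"; cases "b 1"; cases "t 0") (auto simp: changes_def)
next
  case (Suc k)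
  have "of_bool (b (Suc k) \<noteq> b (Suc (Suc k))) + of_bool (t k = b (Suc k)) \<le>
     of_bool (t (Suc k) = b (Suc (Suc k))) + 2 * of_bool (t k = t (Suc k) \<and> t (Suc k) = b (Suc k))
     + (of_bool (t k \<noteq> t (Suc k)) :: nat)"
    by (cases "b (Suc k)"; cases "b (Suc (Suc k))"; cases "t k"; cases "t (Suc k)") auto
  with Suc show ?case by (simp add: changes_def)
qed

(* The cell with top corners (i, j+1), (i+1, j+1) and bottom corner (i+1, j) is monochromatic;
   it corresponds to the node E(i+1, j+1). *)

definition down_cell :: "(nat \<Rightarrow> nat \<Rightarrow> bool) \<Rightarrow> nat \<Rightarrow> nat \<Rightarrow> bool" where
  "down_cell g i j \<longleftrightarrow> g i (Suc j) = g (Suc i) (Suc j) \<and> g (Suc i) (Suc j) = g (Suc i) j"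

definition bottom_agree :: "(nat \<Rightarrow> nat \<Rightarrow> bool) \<Rightarrow> nat \<Rightarrow> nat" where
  "bottom_agree g n = (\<Sum>i<n - 1. of_bool (g i 0 = g (Suc i) 0))"

definition left_agree :: "(nat \<Rightarrow> nat \<Rightarrow> bool) \<Rightarrow> nat \<Rightarrow> nat" where
  "left_agree g n = (\<Sum>j<n - 1. of_bool (g 0 j = g 0 (Suc j)))"

definition hyp_agree :: "(nat \<Rightarrow> nat \<Rightarrow> bool) \<Rightarrow> nat \<Rightarrow> nat" where
  "hyp_agree g n = (\<Sum>j<n - 1. of_bool (g (n - j - 2) (Suc j) = g (n - j - 1) j))"

definition cell_agree :: "(nat \<Rightarrow> nat \<Rightarrow> bool) \<Rightarrow> nat \<Rightarrow> nat" where
  "cell_agree g n = (\<Sum>j<n - 1. \<Sum>i<n - j - 2. of_bool (down_cell g i j))"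

(* Deleting the bottom row of a triangle of size m+2 leaves one of size m+1; the left,
   hypotenuse and cell counts split off the contribution of the deleted strip. *)

lemma shift_agree:
  fixes g :: "nat \<Rightarrow> nat \<Rightarrow> bool"
  defines "g' \<equiv> \<lambda>i j. g i (Suc j)"
  shows "left_agree g (Suc (Suc m)) = of_bool (g 0 0 = g 0 1) + left_agree g' (Suc m)"
    and "hyp_agree g (Suc (Suc m)) = of_bool (g m 1 = g (Suc m) 0) + hyp_agree g' (Suc m)"
    and "cell_agree g (Suc (Suc m)) =
           (\<Sum>i<m. of_bool (g i 1 = g (Suc i) 1 \<and> g (Suc i) 1 = g (Suc i) 0)) + cell_agree g' (Suc m)"
  unfolding left_agree_def hyp_agree_def cell_agree_def down_cell_def g'_def
  by (simp_all add: sum.lessThan_Suc_shift del: sum.lessThan_Suc)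

(* Telescoping strip_changes over all rows of the triangle. *)

lemma triangle_changes:
  "changes (\<lambda>i. g i 0) (n - 1) \<le> left_agree g n + hyp_agree g n + 2 * cell_agree g n"
proof (induction n arbitrary: g)
  case 0
  show ?case by (simp add: changes_def)
next
  case (Suc n)
  consider "n = 0" | m where "n = Suc m" by (cases n) auto
  then show ?case
  proof cases
    case 1
    then show ?thesis by (simp add: changes_def)
  next
    case (2 m)
    let ?g' = "\<lambda>i j. g i (Suc j)"
    have "changes (\<lambda>i. g i 1) m \<le> left_agree ?g' (Suc m) + hyp_agree ?g' (Suc m) + 2 * cell_agree ?g' (Suc m)"
      using Suc.IH[of ?g'] 2 by simp
    with strip_changes[of "\<lambda>i. g i 0" m "\<lambda>i. g i 1"] show ?thesis
      by (simp add: 2 shift_agree)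
  qed
qed

(* The combinatorial core: n - 1 adjacent pairs on the bottom row are either agreements
   there or changes, and the changes are paid for by the rest of the triangle. *)

lemma triangle_agreements:
  "n - 1 \<le> bottom_agree g n + left_agree g n + hyp_agree g n + 2 * cell_agree g n"
proof -
  have "bottom_agree g n + changes (\<lambda>i. g i 0) (n - 1) = (\<Sum>i<n - 1. 1)"
    unfolding bottom_agree_def changes_def sum.distrib[symmetric] by (rule sum.cong) auto
  with triangle_changes[of g n] show ?thesis by simp
qed

lemma nonzero_sgn_eqI: "x \<noteq> Z \<Longrightarrow> y \<noteq> Z \<Longrightarrow> (x = P) = (y = P) \<Longrightarrow> x = y"
  by (cases x; cases y) auto

lemma edge_nodeI:
  assumes "Eset a = {p, q, r}" "p \<noteq> q" "p \<noteq> r" "q \<noteq> r" "D p = Z" "D q = D r" "D q \<noteq> Z"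
  shows "a \<in> edge_nodes D"
proof -
  have "D ` Eset a = {Z, D q}" using assms by auto
  moreover have "D q = P \<or> D q = N" using assms(7) by (cases "D q") auto
  ultimately have "is_node D a" unfolding is_node_def by auto
  moreover have "{x \<in> Eset a. D x = Z} = {p}" using assms by auto
  ultimately show ?thesis unfolding edge_nodes_def zeros_def by simp
qed

lemma interior_nodeI:
  assumes "Eset a = {p, q, r}" "D p = D q" "D q = D r" "D q \<noteq> Z"
  shows "a \<in> interior_nodes D"
proof -
  have "D ` Eset a = {D q}" using assms by auto
  moreover have "D q = P \<or> D q = N" using assms(4) by (cases "D q") auto
  ultimately have "is_node D a" unfolding is_node_def by auto
  moreover have "{x \<in> Eset a. D x = Z} = {}" using assms by auto
  then have "zeros D a = 0" unfolding zeros_def by (simp only: card.empty)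
  ultimately show ?thesis unfolding interior_nodes_def by simp
qed

lemma vertex_nonbottom_nodeI:
  assumes "Eset a = {p, q, r}" "p \<noteq> q" "p \<noteq> r" "q \<noteq> r" "D p = Z" "D q = Z" "D r \<noteq> Z"
    and "p \<notin> {(fst a - 1, snd a), (fst a, snd a - 1)}"
  shows "a \<in> vertex_nodes D - bottom_nodes D"
proof -
  have "D ` Eset a = {Z, D r}" using assms by auto
  moreover have "D r = P \<or> D r = N" using assms(7) by (cases "D r") auto
  ultimately have "is_node D a" unfolding is_node_def by auto
  moreover have "{x \<in> Eset a. D x = Z} = {p, q}" using assms by auto
  ultimately show ?thesis
    unfolding vertex_nodes_def bottom_nodes_def zeros_def using assms(2,8) by auto
qed

lemma node_near_support:
  assumes "is_node D a"
  shows "a \<in> support2 D \<union> (\<lambda>(x, y). (x + 1, y)) ` support2 D \<union> (\<lambda>(x, y). (x, y + 1)) ` support2 D"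
proof (rule ccontr)
  obtain x y where a: "a = (x, y)" by (cases a)
  assume "\<not> ?thesis"
  then have "D (x, y) = Z" "D (x - 1, y) = Z" "D (x, y - 1) = Z"
    unfolding a support2_def by (auto simp: image_iff split: prod.splits)
  then have "D ` Eset a = {Z}" unfolding Eset_def a by auto
  with assms show False unfolding is_node_def by auto
qed

lemma finite_nodes:
  assumes "finite (support2 D)" "A \<subseteq> {a. is_node D a}"
  shows "finite A"
proof (rule finite_subset)
  show "A \<subseteq> support2 D \<union> (\<lambda>(x, y). (x + 1, y)) ` support2 D \<union> (\<lambda>(x, y). (x, y + 1)) ` support2 D"
    using assms(2) node_near_support by blast
qed (use assms(1) in auto)

definition triangular :: "diagram2 \<Rightarrow> nat \<Rightarrow> bool" where
  "triangular D n \<longleftrightarrow> (\<forall>x y. D (x, y) = Z \<longleftrightarrow> \<not> (0 \<le> x \<and> 0 \<le> y \<and> x + y < int n))"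

lemma triangular_zero_iff:
  "triangular D n \<Longrightarrow> D (x, y) = Z \<longleftrightarrow> \<not> (0 \<le> x \<and> 0 \<le> y \<and> x + y < int n)"
  unfolding triangular_def by blast

lemma triangular_of_support:
  assumes "support2 D = {(a, b). a \<ge> 0 \<and> b \<ge> 0 \<and> a + b < int n}"
  shows "triangular D n"
  using assms unfolding triangular_def support2_def by (metis (mono_tags, lifting) case_prod_conv mem_Collect_eq)

lemma triangular_finite_support:
  assumes "triangular D n"
  shows "finite (support2 D)"
proof (rule finite_subset)
  show "support2 D \<subseteq> {0..int n} \<times> {0..int n}"
    using assms unfolding triangular_def support2_def by force
qed simp

definition positive_at :: "diagram2 \<Rightarrow> nat \<Rightarrow> nat \<Rightarrow> bool" where
  "positive_at D i j \<longleftrightarrow> D (int i, int j) = P"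

lemma bottom_edge_node:
  assumes "triangular D n" "i < n - 1" "positive_at D i 0 = positive_at D (Suc i) 0"
  shows "(int i + 1, 0) \<in> edge_nodes D"
proof (rule edge_nodeI[where p = "(int i + 1, -1)" and q = "(int i + 1, 0)" and r = "(int i, 0)"])
  note zero = triangular_zero_iff[OF assms(1)]
  show "D (int i + 1, 0) = D (int i, 0)"
    using assms(2,3) by (intro nonzero_sgn_eqI) (auto simp: zero positive_at_def add.commute)
  show "D (int i + 1, 0) \<noteq> Z" "D (int i + 1, -1) = Z"
    using assms(2) by (auto simp: zero)
qed (auto simp: Eset_def)

lemma left_edge_node:
  assumes "triangular D n" "j < n - 1" "positive_at D 0 j = positive_at D 0 (Suc j)"
  shows "(0, int j + 1) \<in> edge_nodes D"
proof (rule edge_nodeI[where p = "(-1, int j + 1)" and q = "(0, int j + 1)" and r = "(0, int j)"])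
  note zero = triangular_zero_iff[OF assms(1)]
  show "D (0, int j + 1) = D (0, int j)"
    using assms(2,3) by (intro nonzero_sgn_eqI) (auto simp: zero positive_at_def add.commute)
  show "D (0, int j + 1) \<noteq> Z" "D (-1, int j + 1) = Z"
    using assms(2) by (auto simp: zero)
qed (auto simp: Eset_def)

lemma hypotenuse_edge_node:
  assumes "triangular D n" "j < n - 1"
    and "positive_at D (n - j - 2) (Suc j) = positive_at D (n - j - 1) j"
  shows "(int (n - j - 1), int j + 1) \<in> edge_nodes D"
proof -
  note zero = triangular_zero_iff[OF assms(1)]
  define k where "k = n - j - 2"
  have n: "n = j + k + 2" using assms(2) unfolding k_def by arith
  have same: "positive_at D k (Suc j) = positive_at D (Suc k) j"
    using assms(3) by (simp add: n)
  have "(int k + 1, int j + 1) \<in> edge_nodes D"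
  proof (rule edge_nodeI[where p = "(int k + 1, int j + 1)" and q = "(int k, int j + 1)" and r = "(int k + 1, int j)"])
    show "D (int k, int j + 1) = D (int k + 1, int j)"
      using same by (intro nonzero_sgn_eqI) (auto simp: zero n positive_at_def add.commute)
    show "D (int k, int j + 1) \<noteq> Z" "D (int k + 1, int j + 1) = Z"
      by (auto simp: zero n)
  qed (auto simp: Eset_def)
  then show ?thesis by (simp add: n add.commute)
qed

lemma cell_interior_node:
  assumes "triangular D n" "j < n - 1" "i < n - j - 2" "down_cell (positive_at D) i j"
  shows "(int i + 1, int j + 1) \<in> interior_nodes D"
proof (rule interior_nodeI[where p = "(int i + 1, int j + 1)" and q = "(int i, int j + 1)" and r = "(int i + 1, int j)"])
  note zero = triangular_zero_iff[OF assms(1)]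
  have nonzero: "D (int i + 1, int j + 1) \<noteq> Z" "D (int i, int j + 1) \<noteq> Z" "D (int i + 1, int j) \<noteq> Z"
    using assms(2,3) by (auto simp: zero)
  have "(D (int i, int j + 1) = P) = (D (int i + 1, int j + 1) = P)"
       "(D (int i + 1, int j + 1) = P) = (D (int i + 1, int j) = P)"
    using assms(4) by (simp_all add: down_cell_def positive_at_def add.commute)
  then show "D (int i + 1, int j + 1) = D (int i, int j + 1)" "D (int i, int j + 1) = D (int i + 1, int j)"
    using nonzero by (auto intro: nonzero_sgn_eqI)
  show "D (int i, int j + 1) \<noteq> Z" by (fact nonzero(2))
qed (auto simp: Eset_def)

lemma corner_nodes:
  assumes "triangular D n" "n \<ge> 1"
  shows "(int n, 0) \<in> vertex_nodes D - bottom_nodes D" "(0, int n) \<in> vertex_nodes D - bottom_nodes D"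
proof -
  note zero = triangular_zero_iff[OF assms(1)]
  show "(int n, 0) \<in> vertex_nodes D - bottom_nodes D"
    by (rule vertex_nonbottom_nodeI[where p = "(int n, 0)" and q = "(int n, -1)" and r = "(int n - 1, 0)"])
       (use assms(2) in \<open>auto simp: zero Eset_def\<close>)
  show "(0, int n) \<in> vertex_nodes D - bottom_nodes D"
    by (rule vertex_nonbottom_nodeI[where p = "(0, int n)" and q = "(-1, int n)" and r = "(0, int n - 1)"])
       (use assms(2) in \<open>auto simp: zero Eset_def\<close>)
qed

lemma count_as_card:
  assumes "finite A" "inj_on f {x \<in> A. Q x}"
  shows "(\<Sum>x\<in>A. of_bool (Q x) :: nat) = card (f ` {x \<in> A. Q x})"
proof -
  have "A \<inter> {x. Q x} = {x \<in> A. Q x}" by blast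
  with assms show ?thesis by (simp add: card_image)
qed

lemma boundary_agree_le_edge_nodes:
  assumes "triangular D n"
  defines "g \<equiv> positive_at D"
  shows "bottom_agree g n + left_agree g n + hyp_agree g n \<le> card (edge_nodes D)"
proof -
  define B where "B = (\<lambda>i::nat. (int i + 1, 0::int)) ` {i \<in> {..<n - 1}. g i 0 = g (Suc i) 0}"
  define L where "L = (\<lambda>j::nat. (0::int, int j + 1)) ` {j \<in> {..<n - 1}. g 0 j = g 0 (Suc j)}"
  define H where "H = (\<lambda>j::nat. (int (n - j - 1), int j + 1)) `
                        {j \<in> {..<n - 1}. g (n - j - 2) (Suc j) = g (n - j - 1) j}"
  have counts: "bottom_agree g n = card B" "left_agree g n = card L" "hyp_agree g n = card H"
    unfolding bottom_agree_def left_agree_def hyp_agree_def B_def L_def H_def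
    by (intro count_as_card; force simp: inj_on_def)+
  have "B \<union> L \<union> H \<subseteq> edge_nodes D"
    using bottom_edge_node[OF assms(1)] left_edge_node[OF assms(1)] hypotenuse_edge_node[OF assms(1)]
    unfolding B_def L_def H_def g_def by auto
  moreover have "finite (edge_nodes D)"
    using finite_nodes[OF triangular_finite_support[OF assms(1)]] by (auto simp: edge_nodes_def)
  moreover have "B \<inter> L = {}" "(B \<union> L) \<inter> H = {}"
    unfolding B_def L_def H_def by auto
  moreover have "finite B" "finite L" "finite H"
    unfolding B_def L_def H_def by auto
  ultimately show ?thesis
    unfolding counts by (metis card_Un_disjoint card_mono finite_UnI)
qed

lemma cell_agree_le_interior_nodes:
  assumes "triangular D n"
  shows "cell_agree (positive_at D) n \<le> card (interior_nodes D)"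
proof -
  define T where "T = (SIGMA j:{..<n - 1}. {..<n - j - 2})"
  define agrees where "agrees p \<longleftrightarrow> down_cell (positive_at D) (snd p) (fst p)" for p :: "nat \<times> nat"
  define node where "node p = (int (snd p) + 1, int (fst p) + 1)" for p :: "nat \<times> nat"
  have "cell_agree (positive_at D) n = (\<Sum>(j, i)\<in>T. of_bool (down_cell (positive_at D) i j))"
    unfolding cell_agree_def T_def by (rule sum.Sigma) auto
  also have "\<dots> = (\<Sum>p\<in>T. of_bool (agrees p))"
    by (rule sum.cong) (auto simp: agrees_def)
  also have "\<dots> = card (node ` {p \<in> T. agrees p})"
    by (rule count_as_card) (auto simp: T_def node_def inj_on_def)
  also have "\<dots> \<le> card (interior_nodes D)"
  proof (rule card_mono)
    show "finite (interior_nodes D)"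
      using finite_nodes[OF triangular_finite_support[OF assms]] by (auto simp: interior_nodes_def)
    show "node ` {p \<in> T. agrees p} \<subseteq> interior_nodes D"
      using cell_interior_node[OF assms] by (auto simp: T_def agrees_def node_def)
  qed
  finally show ?thesis .
qed

lemma corners_bound:
  assumes "triangular D n" "n \<ge> 1"
  shows "card (bottom_nodes D) + 2 \<le> card (vertex_nodes D)"
proof -
  let ?corners = "{(int n, 0), (0, int n)}"
  have fin: "finite (vertex_nodes D)"
    using finite_nodes[OF triangular_finite_support[OF assms(1)]] by (auto simp: vertex_nodes_def)
  have corners: "?corners \<subseteq> vertex_nodes D" "?corners \<inter> bottom_nodes D = {}"
    using corner_nodes[OF assms] by blast+
  have two: "card ?corners = 2" using assms(2) by simp
  have "bottom_nodes D \<subseteq> vertex_nodes D"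
    unfolding bottom_nodes_def by blast
  with corners(2) have "bottom_nodes D \<subseteq> vertex_nodes D - ?corners" by blast
  then have "card (bottom_nodes D) \<le> card (vertex_nodes D - ?corners)"
    using fin by (intro card_mono) auto
  also have "\<dots> = card (vertex_nodes D) - 2"
    using corners(1) fin two by (simp add: card_Diff_subset)
  finally show ?thesis using card_mono[OF fin corners(1)] two by linarith
qed

theorem mainTheorem8:
  fixes D :: diagram2 and d :: int
  assumes "newton_diagram2 D"
    and "d \<ge> 1"
    and "support2 D = {(a, b). a \<ge> 0 \<and> b \<ge> 0 \<and> a + b < d}"
  shows "SC D \<ge> (real_of_int d + 1) / 2"
proof -
  define n where "n = nat d"
  have d: "d = int n" "n \<ge> 1" using assms(2) by (auto simp: n_def)
  have tri: "triangular D n" using assms(3) d(1) by (intro triangular_of_support) simp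
  have "n - 1 \<le> card (edge_nodes D) + 2 * card (interior_nodes D)"
    using triangle_agreements[of n "positive_at D"] boundary_agree_le_edge_nodes[OF tri]
      cell_agree_le_interior_nodes[OF tri] by linarith
  then have edges: "real n - 1 \<le> card (edge_nodes D) + 2 * card (interior_nodes D)"
    using d(2) by linarith
  have vertices: "real (card (bottom_nodes D)) + 2 \<le> card (vertex_nodes D)"
    using corners_bound[OF tri d(2)] by linarith
  show ?thesis
    using edges vertices unfolding SC_def d(1) by (simp add: field_simps)
qed

end
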